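(* Let $\{u_1,\ldots,u_r\}\subset\mathcal E$ be a set of differential indeterminates over $\mathcal F$, and let $P_i(\mathbb U,\mathbb Y)\in\mathcal F\{\mathbb U,\mathbb Y\}$ $(i=1,\ldots,m)$ be differential polynomials in the differential indeterminates $\mathbb U=(u_1,\ldots,u_r)$ and $\mathbb Y=(y_1,\ldots,y_n)$. Let $\overline{\mathbb Y}=(\overline y_1,\ldots,\overline y_n)$ with $\overline y_i\in\mathcal E$ differentially free from $\mathcal F\langle\mathbb U\rangle$. If $P_i(\mathbb U,\overline{\mathbb Y})$ $(i=1,\ldots,m)$ are differentially dependent over $\mathcal F\langle\mathbb U\rangle$, then for any specialization of $\mathbb U$ to $\overline{\mathbb U}$ in $\mathcal F^r$, the elements $P_i(\overline{\mathbb U},\overline{\mathbb Y})$ $(i=1,\ldots,m)$ are differentially dependent over $\mathcal F$.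
   Context: $\mathcal F$ is an ordinary differential field of characteristic $0$ with derivation $\delta$ and $\mathcal E$ a fixed universal differential extension field of $\mathcal F$. A set $\Sigma$ is differentially dependent over a differential field $\mathcal G$ if the set of all derivatives of all elements of $\Sigma$ is algebraically dependent over $\mathcal G$. "$\overline{\mathbb Y}$ differentially free from $\mathcal F\langle\mathbb U\rangle$" means that $u_1,\dots,u_r$ are differential indeterminates (differentially independent) over $\mathcal F\langle\overline{\mathbb Y}\rangle$. *)

theory Defs
  imports Main "HOL-Library.Poly_Mapping"
begin

definition is_derivation :: "('a::field \<Rightarrow> 'a) \<Rightarrow> bool" where
  "is_derivation D \<longleftrightarrow>
     (\<forall>x y. D (x + y) = D x + D y) \<and> (\<forall>x y. D (x * y) = x * D y + D x * y)"

definition diff_subfield :: "('a::field \<Rightarrow> 'a) \<Rightarrow> 'a set \<Rightarrow> bool" where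
  "diff_subfield D K \<longleftrightarrow> 0 \<in> K \<and> 1 \<in> K \<and>
     (\<forall>x\<in>K. \<forall>y\<in>K. x + y \<in> K \<and> x * y \<in> K) \<and>
     (\<forall>x\<in>K. - x \<in> K \<and> inverse x \<in> K \<and> D x \<in> K)"

definition diff_field_gen :: "('a::field \<Rightarrow> 'a) \<Rightarrow> 'a set \<Rightarrow> 'a set \<Rightarrow> 'a set" where
  "diff_field_gen D K S = \<Inter>{L. diff_subfield D L \<and> K \<union> S \<subseteq> L}"

definition poly_eval :: "(('i \<Rightarrow>\<^sub>0 nat) \<Rightarrow>\<^sub>0 'a::comm_ring_1) \<Rightarrow> ('i \<Rightarrow> 'a) \<Rightarrow> 'a" where
  "poly_eval p x = (\<Sum>mo\<in>Poly_Mapping.keys p. Poly_Mapping.lookup p mo * (\<Prod>v\<in>Poly_Mapping.keys mo. x v ^ Poly_Mapping.lookup mo v))"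

definition alg_dependent :: "'a::field set \<Rightarrow> 'i set \<Rightarrow> ('i \<Rightarrow> 'a) \<Rightarrow> bool" where
  "alg_dependent G I x \<longleftrightarrow>
     (\<exists>p :: ('i \<Rightarrow>\<^sub>0 nat) \<Rightarrow>\<^sub>0 'a. p \<noteq> 0 \<and> (\<forall>mo. Poly_Mapping.lookup p mo \<in> G) \<and>
        (\<forall>mo\<in>Poly_Mapping.keys p. Poly_Mapping.keys mo \<subseteq> I) \<and> poly_eval p x = 0)"

definition diff_dependent :: "('a::field \<Rightarrow> 'a) \<Rightarrow> 'a set \<Rightarrow> 'i set \<Rightarrow> ('i \<Rightarrow> 'a) \<Rightarrow> bool" where
  "diff_dependent D G I x \<longleftrightarrow> alg_dependent G (I \<times> UNIV) (\<lambda>(i, k). (D ^^ k) (x i))"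

text \<open>Differential polynomials in U = (u_0..u_{r-1}), Y = (y_0..y_{n-1}):
  ordinary polynomials in the variables (Inl j, k) = u_j^(k) and (Inr i, k) = y_i^(k).\<close>
type_synonym 'a dpoly = "(((nat + nat) \<times> nat) \<Rightarrow>\<^sub>0 nat) \<Rightarrow>\<^sub>0 'a"

definition is_diff_poly :: "'a::comm_ring_1 set \<Rightarrow> nat \<Rightarrow> nat \<Rightarrow> 'a dpoly \<Rightarrow> bool" where
  "is_diff_poly F r n P \<longleftrightarrow> (\<forall>mo. Poly_Mapping.lookup P mo \<in> F) \<and>
     (\<forall>mo\<in>Poly_Mapping.keys P. \<forall>v\<in>Poly_Mapping.keys mo.
        (case fst v of Inl j \<Rightarrow> j < r | Inr i \<Rightarrow> i < n))"

definition dpoly_eval :: "('a::comm_ring_1 \<Rightarrow> 'a) \<Rightarrow> 'a dpoly \<Rightarrow> (nat \<Rightarrow> 'a) \<Rightarrow> (nat \<Rightarrow> 'a) \<Rightarrow> 'a" where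
  "dpoly_eval D P a b =
     poly_eval P (\<lambda>(v, k). (D ^^ k) (case v of Inl j \<Rightarrow> a j | Inr i \<Rightarrow> b i))"

end

theory Submission
  imports Defs "HOL-Computational_Algebra.Polynomial"
begin

text \<open>The derivatives of \<open>U\<close> are algebraically independent over \<open>L = F\<langle>Ybar\<rangle>\<close>, so every
  element of the ring \<open>L[U]\<close> they generate is a unique polynomial in them, and substituting
  \<open>Ubar\<close> for \<open>U\<close> is a well-defined ring homomorphism on \<open>L[U]\<close> commuting with the derivation.
  Clearing denominators, a differential relation among the \<open>P_i(U, Ybar)\<close> over \<open>F\<langle>U\<rangle>\<close> has
  coefficients in \<open>F[U]\<close>. Specializing it directly could kill every coefficient, so instead one
  substitutes \<open>Ubar + t (U - Ubar)\<close>, divides by the largest power of \<open>t\<close> dividing all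
  coefficients and sets \<open>t = 0\<close>. This gives a relation among the \<open>P_i(Ubar, Ybar)\<close> and their
  derivatives with coefficients in \<open>F[U]\<close>, not all zero. Its monomials take values in \<open>L\<close>, so
  by the independence of \<open>U\<close> over \<open>L\<close> the coefficient of any fixed monomial in \<open>U\<close> yields a
  relation over \<open>F\<close>.\<close>

section \<open>Evaluating polynomials\<close>

definition monomial_eval :: "('v \<Rightarrow> 'b::comm_ring_1) \<Rightarrow> ('v \<Rightarrow>\<^sub>0 nat) \<Rightarrow> 'b" where
  "monomial_eval x mo = (\<Prod>v\<in>Poly_Mapping.keys mo. x v ^ Poly_Mapping.lookup mo v)"

definition poly_eval_map ::
    "('a::comm_ring_1 \<Rightarrow> 'b::comm_ring_1) \<Rightarrow> ('v \<Rightarrow> 'b) \<Rightarrow> (('v \<Rightarrow>\<^sub>0 nat) \<Rightarrow>\<^sub>0 'a) \<Rightarrow> 'b" where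
  "poly_eval_map h x p =
     (\<Sum>mo\<in>Poly_Mapping.keys p. h (Poly_Mapping.lookup p mo) * monomial_eval x mo)"

definition is_ring_hom :: "('a::comm_ring_1 \<Rightarrow> 'b::comm_ring_1) \<Rightarrow> bool" where
  "is_ring_hom h \<longleftrightarrow> h 0 = 0 \<and> h 1 = 1 \<and> (\<forall>a b. h (a + b) = h a + h b \<and> h (a * b) = h a * h b)"

lemma is_ring_hom_id: "is_ring_hom id"
  and is_ring_hom_const_poly: "is_ring_hom (\<lambda>c. [:c:])"
  by (simp_all add: is_ring_hom_def)

lemma poly_eval_eq_poly_eval_map: "poly_eval p x = poly_eval_map id x p"
  by (simp add: poly_eval_def poly_eval_map_def monomial_eval_def)

lemma monomial_eval_superset:
  assumes "finite S" "Poly_Mapping.keys mo \<subseteq> S"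
  shows "monomial_eval x mo = (\<Prod>v\<in>S. x v ^ Poly_Mapping.lookup mo v)"
  unfolding monomial_eval_def
  by (rule prod.mono_neutral_left) (use assms in \<open>auto simp: in_keys_iff\<close>)

lemma monomial_eval_zero [simp]: "monomial_eval x 0 = 1"
  by (simp add: monomial_eval_def)

lemma monomial_eval_single_one [simp]: "monomial_eval x (Poly_Mapping.single v (Suc 0)) = x v"
  by (simp add: monomial_eval_def)

lemma monomial_eval_add: "monomial_eval x (a + b) = monomial_eval x a * monomial_eval x b"
proof -
  let ?S = "Poly_Mapping.keys a \<union> Poly_Mapping.keys b"
  have "monomial_eval x (a + b) = (\<Prod>v\<in>?S. x v ^ Poly_Mapping.lookup (a + b) v)"
    by (rule monomial_eval_superset) (use keys_add[of a b] in auto)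
  also have "\<dots> = (\<Prod>v\<in>?S. x v ^ Poly_Mapping.lookup a v) * (\<Prod>v\<in>?S. x v ^ Poly_Mapping.lookup b v)"
    by (simp add: lookup_add power_add prod.distrib)
  also have "\<dots> = monomial_eval x a * monomial_eval x b"
    using monomial_eval_superset[of ?S a x] monomial_eval_superset[of ?S b x] by simp
  finally show ?thesis .
qed

lemma monomial_eval_cong:
  "(\<And>v. v \<in> Poly_Mapping.keys mo \<Longrightarrow> x v = y v) \<Longrightarrow> monomial_eval x mo = monomial_eval y mo"
  unfolding monomial_eval_def by (rule prod.cong) auto

lemma poly_monomial_eval: "poly (monomial_eval w mo) t = monomial_eval (\<lambda>v. poly (w v) t) mo"
  by (simp add: monomial_eval_def poly_prod)

lemma poly_mapping_sum_single:
  "p = (\<Sum>k\<in>Poly_Mapping.keys p. Poly_Mapping.single k (Poly_Mapping.lookup p k))"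
proof (rule poly_mapping_eqI)
  fix k
  show "Poly_Mapping.lookup p k =
      Poly_Mapping.lookup (\<Sum>k\<in>Poly_Mapping.keys p. Poly_Mapping.single k (Poly_Mapping.lookup p k)) k"
    by (cases "k \<in> Poly_Mapping.keys p") (auto simp: lookup_sum lookup_single when_def in_keys_iff)
qed

lemma lookup_single_zero_mult:
  "Poly_Mapping.lookup (Poly_Mapping.single 0 c * p) k = (c::'a::comm_ring_1) * Poly_Mapping.lookup p k"
  by (simp add: mult_map_scale_conv_mult[symmetric] Poly_Mapping.map.rep_eq when_def)

lemma poly_eval_map_superset:
  assumes "finite S" "Poly_Mapping.keys p \<subseteq> S" "h 0 = 0"
  shows "poly_eval_map h x p = (\<Sum>mo\<in>S. h (Poly_Mapping.lookup p mo) * monomial_eval x mo)"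
  unfolding poly_eval_map_def
  by (rule sum.mono_neutral_left) (use assms in \<open>auto simp: not_in_keys_iff_lookup_eq_zero\<close>)

lemma poly_eval_map_cong:
  "(\<And>mo. mo \<in> Poly_Mapping.keys p \<Longrightarrow> h (Poly_Mapping.lookup p mo) = h' (Poly_Mapping.lookup p mo))
   \<Longrightarrow> poly_eval_map h x p = poly_eval_map h' x p"
  unfolding poly_eval_map_def by (rule sum.cong) auto

lemma poly_eval_map_zero [simp]: "poly_eval_map h x 0 = 0"
  by (simp add: poly_eval_map_def)

lemma poly_eval_map_single:
  "is_ring_hom h \<Longrightarrow> poly_eval_map h x (Poly_Mapping.single mo c) = h c * monomial_eval x mo"
  by (cases "c = 0") (auto simp: poly_eval_map_def is_ring_hom_def)

lemma poly_eval_map_one: "is_ring_hom h \<Longrightarrow> poly_eval_map h x 1 = 1"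
  using poly_eval_map_single[of h x 0 1] by (simp add: is_ring_hom_def)

lemma poly_eval_map_add:
  assumes "is_ring_hom h"
  shows "poly_eval_map h x (p + q) = poly_eval_map h x p + poly_eval_map h x q"
proof -
  let ?S = "Poly_Mapping.keys p \<union> Poly_Mapping.keys q"
  have h0: "h 0 = 0" using assms by (simp add: is_ring_hom_def)
  have "poly_eval_map h x (p + q) = (\<Sum>mo\<in>?S. h (Poly_Mapping.lookup (p + q) mo) * monomial_eval x mo)"
    using poly_eval_map_superset[of ?S "p + q" h x] keys_add[of p q] h0 by simp
  also have "\<dots> = (\<Sum>mo\<in>?S. h (Poly_Mapping.lookup p mo) * monomial_eval x mo
      + h (Poly_Mapping.lookup q mo) * monomial_eval x mo)"
    using assms by (simp add: lookup_add is_ring_hom_def algebra_simps)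
  also have "\<dots> = poly_eval_map h x p + poly_eval_map h x q"
    using poly_eval_map_superset[of ?S p h x] poly_eval_map_superset[of ?S q h x] h0
    by (simp add: sum.distrib)
  finally show ?thesis .
qed

lemma poly_eval_map_sum:
  assumes "is_ring_hom h"
  shows "poly_eval_map h x (\<Sum>i\<in>I. f i) = (\<Sum>i\<in>I. poly_eval_map h x (f i))"
  by (induction I rule: infinite_finite_induct)
     (auto simp: poly_eval_map_add[OF assms])

lemma poly_eval_map_mult:
  assumes "is_ring_hom h"
  shows "poly_eval_map h x (p * q) = poly_eval_map h x p * poly_eval_map h x q"
proof -
  have "p * q = (\<Sum>a\<in>Poly_Mapping.keys p. \<Sum>b\<in>Poly_Mapping.keys q.
      Poly_Mapping.single a (Poly_Mapping.lookup p a) * Poly_Mapping.single b (Poly_Mapping.lookup q b))"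
    by (subst poly_mapping_sum_single[of p], subst poly_mapping_sum_single[of q]) (simp add: sum_product)
  then have "poly_eval_map h x (p * q) = (\<Sum>a\<in>Poly_Mapping.keys p. \<Sum>b\<in>Poly_Mapping.keys q.
      h (Poly_Mapping.lookup p a) * monomial_eval x a * (h (Poly_Mapping.lookup q b) * monomial_eval x b))"
    using assms
    by (simp add: poly_eval_map_sum mult_single poly_eval_map_single monomial_eval_add
        is_ring_hom_def mult_ac)
  also have "\<dots> = poly_eval_map h x p * poly_eval_map h x q"
    by (simp add: poly_eval_map_def sum_product)
  finally show ?thesis .
qed

lemma poly_eval_map_uminus:
  assumes "is_ring_hom h"
  shows "poly_eval_map h x (- p) = - poly_eval_map h x p"
  using poly_eval_map_add[OF assms, of x p "- p"] by (simp add: add.inverse_unique)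

lemma poly_eval_zero [simp]: "poly_eval 0 x = 0"
  and poly_eval_one [simp]: "poly_eval 1 x = 1"
  and poly_eval_add: "poly_eval (p + q) x = poly_eval p x + poly_eval q x"
  and poly_eval_mult: "poly_eval (p * q) x = poly_eval p x * poly_eval q x"
  and poly_eval_uminus: "poly_eval (- p) x = - poly_eval p x"
  and poly_eval_single: "poly_eval (Poly_Mapping.single mo c) x = c * monomial_eval x mo"
  and poly_eval_sum: "poly_eval (sum f I) x = (\<Sum>i\<in>I. poly_eval (f i) x)"
  by (simp_all add: poly_eval_eq_poly_eval_map poly_eval_map_add poly_eval_map_mult
      poly_eval_map_uminus poly_eval_map_single poly_eval_map_sum poly_eval_map_one is_ring_hom_id)

lemma poly_eval_diff: "poly_eval (p - q) x = poly_eval p x - poly_eval q x"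
  using poly_eval_add[of p "- q" x] poly_eval_uminus[of q x] by simp

lemma poly_eval_cong:
  assumes "\<And>mo v. mo \<in> Poly_Mapping.keys p \<Longrightarrow> v \<in> Poly_Mapping.keys mo \<Longrightarrow> x v = y v"
  shows "poly_eval p x = poly_eval p y"
  unfolding poly_eval_eq_poly_eval_map poly_eval_map_def
proof (rule sum.cong[OF refl])
  fix mo assume "mo \<in> Poly_Mapping.keys p"
  then have "monomial_eval x mo = monomial_eval y mo"
    using assms by (intro monomial_eval_cong) auto
  then show "id (Poly_Mapping.lookup p mo) * monomial_eval x mo
      = id (Poly_Mapping.lookup p mo) * monomial_eval y mo" by simp
qed

lemma poly_poly_eval_map_const:
  "poly (poly_eval_map (\<lambda>c. [:c:]) w p) t = poly_eval p (\<lambda>v. poly (w v) t)"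
  by (simp add: poly_eval_map_def poly_eval_eq_poly_eval_map poly_sum poly_monomial_eval)

lemma lowest_coeff_relation:
  fixes a :: "('v \<Rightarrow>\<^sub>0 nat) \<Rightarrow> 'b::idom poly" and y :: "'v \<Rightarrow> 'b poly"
  assumes "finite S" "S \<noteq> {}" "\<And>mo. mo \<in> S \<Longrightarrow> a mo \<noteq> 0"
    and "(\<Sum>mo\<in>S. a mo * monomial_eval y mo) = 0"
  obtains k M where "M \<in> S" "coeff (a M) k \<noteq> 0"
    "(\<Sum>mo\<in>S. coeff (a mo) k * monomial_eval (\<lambda>v. poly (y v) 0) mo) = 0"
proof -
  define k where "k = Min ((\<lambda>mo. order 0 (a mo)) ` S)"
  have "k \<in> (\<lambda>mo. order 0 (a mo)) ` S"
    unfolding k_def using assms(1,2) by (intro Min_in) auto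
  then obtain M where M: "M \<in> S" "order 0 (a M) = k"
    by blast
  have "monom 1 k dvd a mo" if "mo \<in> S" for mo
    using monom_1_dvd_iff[OF assms(3)[OF that]] assms(1) that by (simp add: k_def)
  then obtain g where g: "\<And>mo. mo \<in> S \<Longrightarrow> a mo = monom 1 k * g mo"
    unfolding dvd_def by metis
  have "monom 1 k * (\<Sum>mo\<in>S. g mo * monomial_eval y mo) = 0"
    using assms(4) g by (simp add: sum_distrib_left mult.assoc)
  then have "poly (\<Sum>mo\<in>S. g mo * monomial_eval y mo) 0 = 0"
    by simp
  moreover have "coeff (a mo) k = poly (g mo) 0" if "mo \<in> S" for mo
    using g[OF that] by (simp add: coeff_monom_mult poly_0_coeff_0)
  ultimately have rel: "(\<Sum>mo\<in>S. coeff (a mo) k * monomial_eval (\<lambda>v. poly (y v) 0) mo) = 0"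
    by (simp add: poly_sum poly_monomial_eval)
  have "coeff (a M) k \<noteq> 0"
  proof
    assume "coeff (a M) k = 0"
    moreover have "\<forall>i<k. coeff (a M) i = 0"
      using monom_1_dvd_iff'[of k "a M"] g[OF M(1)] by simp
    ultimately have "monom 1 (Suc k) dvd a M"
      by (simp add: monom_1_dvd_iff' less_Suc_eq)
    then show False
      using monom_1_dvd_iff[OF assms(3)[OF M(1)]] M(2) by simp
  qed
  with M(1) rel show thesis using that by blast
qed

definition is_subring :: "'a::comm_ring_1 set \<Rightarrow> bool" where
  "is_subring S \<longleftrightarrow> 0 \<in> S \<and> 1 \<in> S \<and> (\<forall>x\<in>S. \<forall>y\<in>S. x + y \<in> S \<and> x * y \<in> S) \<and> (\<forall>x\<in>S. - x \<in> S)"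

lemma subring_0: "is_subring S \<Longrightarrow> 0 \<in> S"
  and subring_1: "is_subring S \<Longrightarrow> 1 \<in> S"
  and subring_add: "is_subring S \<Longrightarrow> x \<in> S \<Longrightarrow> y \<in> S \<Longrightarrow> x + y \<in> S"
  and subring_mult: "is_subring S \<Longrightarrow> x \<in> S \<Longrightarrow> y \<in> S \<Longrightarrow> x * y \<in> S"
  and subring_uminus: "is_subring S \<Longrightarrow> x \<in> S \<Longrightarrow> - x \<in> S"
  by (auto simp: is_subring_def)

lemma subring_diff: "is_subring S \<Longrightarrow> x \<in> S \<Longrightarrow> y \<in> S \<Longrightarrow> x - y \<in> S"
  using subring_add[of S x "- y"] subring_uminus[of S y] by simp

lemma subring_sum: "is_subring S \<Longrightarrow> (\<And>i. i \<in> I \<Longrightarrow> f i \<in> S) \<Longrightarrow> sum f I \<in> S"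
  by (induction I rule: infinite_finite_induct) (auto simp: is_subring_def)

lemma subring_prod: "is_subring S \<Longrightarrow> (\<And>i. i \<in> I \<Longrightarrow> f i \<in> S) \<Longrightarrow> prod f I \<in> S"
  by (induction I rule: infinite_finite_induct) (auto simp: is_subring_def)

lemma subring_power: "is_subring S \<Longrightarrow> x \<in> S \<Longrightarrow> x ^ n \<in> S"
  by (induction n) (auto simp: is_subring_def)

lemma monomial_eval_in_subring:
  "is_subring S \<Longrightarrow> (\<And>v. v \<in> Poly_Mapping.keys mo \<Longrightarrow> x v \<in> S) \<Longrightarrow> monomial_eval x mo \<in> S"
  unfolding monomial_eval_def by (rule subring_prod) (auto intro: subring_power)

lemma poly_eval_map_in_subring:
  assumes "is_subring S"
    and "\<And>mo. mo \<in> Poly_Mapping.keys p \<Longrightarrow> h (Poly_Mapping.lookup p mo) \<in> S"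
    and "\<And>mo v. mo \<in> Poly_Mapping.keys p \<Longrightarrow> v \<in> Poly_Mapping.keys mo \<Longrightarrow> x v \<in> S"
  shows "poly_eval_map h x p \<in> S"
  unfolding poly_eval_map_def using assms
  by (intro subring_sum subring_mult monomial_eval_in_subring) auto

lemma poly_eval_in_subring:
  assumes "is_subring S" "\<And>mo. Poly_Mapping.lookup p mo \<in> S"
    and "\<And>mo v. mo \<in> Poly_Mapping.keys p \<Longrightarrow> v \<in> Poly_Mapping.keys mo \<Longrightarrow> x v \<in> S"
  shows "poly_eval p x \<in> S"
  unfolding poly_eval_eq_poly_eval_map using assms by (intro poly_eval_map_in_subring) auto

lemma is_subring_coeffs_in:
  assumes "is_subring S"
  shows "is_subring {p :: 'a::comm_ring_1 poly. \<forall>i. coeff p i \<in> S}"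
  unfolding is_subring_def
proof (intro conjI ballI; (elim CollectE)?)
  fix x y assume "\<forall>i. coeff x i \<in> S" "\<forall>i. coeff y i \<in> S"
  then show "x + y \<in> {p. \<forall>i. coeff p i \<in> S}" "x * y \<in> {p. \<forall>i. coeff p i \<in> S}"
    using assms by (auto simp: coeff_mult subring_add intro!: subring_sum subring_mult)
qed (use assms in \<open>auto simp: subring_0 subring_1 subring_uminus\<close>)

definition ring_hom_on :: "'a::comm_ring_1 set \<Rightarrow> ('a \<Rightarrow> 'b::comm_ring_1) \<Rightarrow> bool" where
  "ring_hom_on S f \<longleftrightarrow> f 0 = 0 \<and> f 1 = 1 \<and>
     (\<forall>x\<in>S. \<forall>y\<in>S. f (x + y) = f x + f y \<and> f (x * y) = f x * f y)"

lemma ring_hom_on_uminus: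
  assumes "ring_hom_on S f" "is_subring S" "x \<in> S"
  shows "f (- x) = - f x"
proof -
  have "f (x + - x) = f x + f (- x)"
    using assms subring_uminus unfolding ring_hom_on_def by blast
  then have "f x + f (- x) = 0"
    using assms(1) by (simp add: ring_hom_on_def)
  then show ?thesis by (simp add: add.inverse_unique)
qed

lemma ring_hom_on_sum:
  "ring_hom_on S f \<Longrightarrow> is_subring S \<Longrightarrow> (\<And>i. i \<in> I \<Longrightarrow> g i \<in> S) \<Longrightarrow>
     f (sum g I) = (\<Sum>i\<in>I. f (g i))"
proof (induction I rule: infinite_finite_induct)
  case (insert x F)
  then show ?case using subring_sum[of S F g] by (simp add: ring_hom_on_def)
qed (auto simp: ring_hom_on_def)

lemma ring_hom_on_prod:
  "ring_hom_on S f \<Longrightarrow> is_subring S \<Longrightarrow> (\<And>i. i \<in> I \<Longrightarrow> g i \<in> S) \<Longrightarrow>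
     f (prod g I) = (\<Prod>i\<in>I. f (g i))"
proof (induction I rule: infinite_finite_induct)
  case (insert x F)
  then show ?case using subring_prod[of S F g] by (simp add: ring_hom_on_def)
qed (auto simp: ring_hom_on_def)

lemma ring_hom_on_power: "ring_hom_on S f \<Longrightarrow> is_subring S \<Longrightarrow> x \<in> S \<Longrightarrow> f (x ^ n) = f x ^ n"
proof (induction n)
  case (Suc n)
  then show ?case using subring_power[of S x n] by (simp add: ring_hom_on_def)
qed (auto simp: ring_hom_on_def)

lemma ring_hom_on_poly_eval:
  assumes f: "ring_hom_on S f" and S: "is_subring S"
    and coeffs: "\<And>mo. mo \<in> Poly_Mapping.keys p \<Longrightarrow> Poly_Mapping.lookup p mo \<in> S"
    and vars: "\<And>mo v. mo \<in> Poly_Mapping.keys p \<Longrightarrow> v \<in> Poly_Mapping.keys mo \<Longrightarrow> x v \<in> S"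
  shows "f (poly_eval p x) = poly_eval_map f (f \<circ> x) p"
proof -
  have monomial: "f (monomial_eval x mo) = monomial_eval (f \<circ> x) mo" if "mo \<in> Poly_Mapping.keys p" for mo
    unfolding monomial_eval_def using that vars
    by (subst ring_hom_on_prod[OF f S]) (auto intro: subring_power[OF S] simp: ring_hom_on_power[OF f S])
  have "f (poly_eval p x) = (\<Sum>mo\<in>Poly_Mapping.keys p. f (Poly_Mapping.lookup p mo * monomial_eval x mo))"
    unfolding poly_eval_eq_poly_eval_map poly_eval_map_def id_def using coeffs vars
    by (intro ring_hom_on_sum[OF f S] subring_mult[OF S] monomial_eval_in_subring[OF S]) auto
  also have "\<dots> = poly_eval_map f (f \<circ> x) p"
    unfolding poly_eval_map_def using f coeffs vars
    by (intro sum.cong refl) (simp add: ring_hom_on_def monomial_eval_in_subring[OF S] monomial)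
  finally show ?thesis .
qed

section \<open>Algebraic dependence\<close>

definition polys_over :: "'a::comm_ring_1 set \<Rightarrow> 'v set \<Rightarrow> (('v \<Rightarrow>\<^sub>0 nat) \<Rightarrow>\<^sub>0 'a) set" where
  "polys_over G V = {Q. (\<forall>mo. Poly_Mapping.lookup Q mo \<in> G) \<and>
      (\<forall>mo\<in>Poly_Mapping.keys Q. Poly_Mapping.keys mo \<subseteq> V)}"

lemma polys_over_lookup: "Q \<in> polys_over G V \<Longrightarrow> Poly_Mapping.lookup Q mo \<in> G"
  and polys_over_keys:
    "Q \<in> polys_over G V \<Longrightarrow> mo \<in> Poly_Mapping.keys Q \<Longrightarrow> Poly_Mapping.keys mo \<subseteq> V"
  by (auto simp: polys_over_def)

lemma polys_over_mono: "G \<subseteq> G' \<Longrightarrow> polys_over G V \<subseteq> polys_over G' V"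
  unfolding polys_over_def by blast

lemma polys_over_single:
  "is_subring G \<Longrightarrow> c \<in> G \<Longrightarrow> Poly_Mapping.keys mo \<subseteq> V \<Longrightarrow> Poly_Mapping.single mo c \<in> polys_over G V"
  unfolding polys_over_def by (auto simp: lookup_single when_def is_subring_def)

lemma polys_over_add:
  assumes "is_subring G" "p \<in> polys_over G V" "q \<in> polys_over G V"
  shows "p + q \<in> polys_over G V"
proof -
  have "\<forall>mo. Poly_Mapping.lookup (p + q) mo \<in> G"
    using assms by (auto simp: lookup_add subring_add polys_over_def)
  moreover have "\<forall>mo\<in>Poly_Mapping.keys (p + q). Poly_Mapping.keys mo \<subseteq> V"
    using keys_add[of p q] assms(2,3) unfolding polys_over_def by blast
  ultimately show ?thesis by (simp add: polys_over_def)
qed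

lemma polys_over_uminus: "is_subring G \<Longrightarrow> p \<in> polys_over G V \<Longrightarrow> - p \<in> polys_over G V"
  unfolding polys_over_def by (auto simp: subring_uminus)

lemma polys_over_diff:
  "is_subring G \<Longrightarrow> p \<in> polys_over G V \<Longrightarrow> q \<in> polys_over G V \<Longrightarrow> p - q \<in> polys_over G V"
  using polys_over_add[of G p V "- q"] polys_over_uminus[of G q V] by simp

lemma polys_over_sum:
  "is_subring G \<Longrightarrow> (\<And>i. i \<in> I \<Longrightarrow> f i \<in> polys_over G V) \<Longrightarrow> sum f I \<in> polys_over G V"
proof (induction I rule: infinite_finite_induct)
  case (insert i I)
  then show ?case by (simp add: polys_over_add)
qed (auto simp: polys_over_def subring_0)

lemma polys_over_mult:
  assumes G: "is_subring G" and p: "p \<in> polys_over G V" and q: "q \<in> polys_over G V"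
  shows "p * q \<in> polys_over G V"
proof -
  have "p * q = (\<Sum>a\<in>Poly_Mapping.keys p. \<Sum>b\<in>Poly_Mapping.keys q.
      Poly_Mapping.single (a + b) (Poly_Mapping.lookup p a * Poly_Mapping.lookup q b))"
    by (subst poly_mapping_sum_single[of p], subst poly_mapping_sum_single[of q])
       (simp add: sum_product mult_single)
  also have "\<dots> \<in> polys_over G V"
  proof (intro polys_over_sum[OF G] polys_over_single[OF G])
    fix a b assume "a \<in> Poly_Mapping.keys p" "b \<in> Poly_Mapping.keys q"
    then show "Poly_Mapping.keys (a + b) \<subseteq> V"
      using keys_add[of a b] polys_over_keys[OF p] polys_over_keys[OF q] by blast
    show "Poly_Mapping.lookup p a * Poly_Mapping.lookup q b \<in> G"
      by (intro subring_mult[OF G] polys_over_lookup[OF p] polys_over_lookup[OF q])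
  qed
  finally show ?thesis .
qed

lemma alg_dependent_iff_polys_over:
  "alg_dependent G I x \<longleftrightarrow> (\<exists>p\<in>polys_over G I. p \<noteq> 0 \<and> poly_eval p x = 0)"
  unfolding alg_dependent_def polys_over_def by blast

lemma alg_dependent_mono: "G \<subseteq> G' \<Longrightarrow> alg_dependent G I x \<Longrightarrow> alg_dependent G' I x"
  unfolding alg_dependent_iff_polys_over using polys_over_mono by blast

lemma alg_dependent_cong:
  assumes "\<And>v. v \<in> I \<Longrightarrow> x v = y v" "alg_dependent G I x"
  shows "alg_dependent G I y"
proof -
  obtain p where p: "p \<in> polys_over G I" "p \<noteq> 0" "poly_eval p x = 0"
    using assms(2) unfolding alg_dependent_iff_polys_over by blast
  have "poly_eval p x = poly_eval p y"
    using assms(1) polys_over_keys[OF p(1)] by (intro poly_eval_cong) auto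
  with p show ?thesis unfolding alg_dependent_iff_polys_over by auto
qed

lemma alg_dependentI_relation:
  assumes "finite S" "\<And>mo. mo \<in> S \<Longrightarrow> Poly_Mapping.keys mo \<subseteq> I"
    and "0 \<in> G" "\<And>mo. mo \<in> S \<Longrightarrow> d mo \<in> G" "M \<in> S" "d M \<noteq> 0"
    and "(\<Sum>mo\<in>S. d mo * monomial_eval x mo) = 0"
  shows "alg_dependent G I x"
proof -
  define q where "q = Abs_poly_mapping (\<lambda>mo. if mo \<in> S then d mo else 0)"
  have "finite {mo. (if mo \<in> S then d mo else 0) \<noteq> 0}"
    using assms(1) by (rule rev_finite_subset) (auto split: if_splits)
  then have lookup_q: "Poly_Mapping.lookup q = (\<lambda>mo. if mo \<in> S then d mo else 0)"
    unfolding q_def by simp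
  have keys_q: "Poly_Mapping.keys q \<subseteq> S"
    by (auto simp: in_keys_iff lookup_q split: if_splits)
  have "q \<in> polys_over G I"
    using assms(2-4) keys_q by (auto simp: polys_over_def lookup_q)
  moreover have "q \<noteq> 0"
    using assms(5,6) lookup_q by (metis lookup_zero)
  moreover have "poly_eval q x = 0"
    using poly_eval_map_superset[OF assms(1) keys_q, of id x] assms(7)
    by (simp add: poly_eval_eq_poly_eval_map lookup_q)
  ultimately show ?thesis unfolding alg_dependent_iff_polys_over by blast
qed

definition fractions :: "'a::field set \<Rightarrow> 'a set" where
  "fractions R = {x / y | x y. x \<in> R \<and> y \<in> R \<and> y \<noteq> 0}"

lemma subset_fractions:
  assumes "is_subring R" shows "R \<subseteq> fractions R"
proof
  fix x assume "x \<in> R"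
  then show "x \<in> fractions R"
    unfolding fractions_def using subring_1[OF assms] by (intro CollectI exI[of _ x] exI[of _ 1]) simp
qed

lemma alg_dependent_fractions:
  assumes R: "is_subring R" and dep: "alg_dependent (fractions R) I x"
  shows "alg_dependent R I x"
proof -
  obtain p where "p \<noteq> 0" and p_frac: "\<And>mo. Poly_Mapping.lookup p mo \<in> fractions R"
    and p_vars: "\<And>mo. mo \<in> Poly_Mapping.keys p \<Longrightarrow> Poly_Mapping.keys mo \<subseteq> I"
    and "poly_eval p x = 0"
    using dep unfolding alg_dependent_def by blast
  have "\<forall>mo. \<exists>a b. a \<in> R \<and> b \<in> R \<and> b \<noteq> 0 \<and> Poly_Mapping.lookup p mo = a / b"
    using p_frac unfolding fractions_def by blast
  then obtain nu de where "\<forall>mo. nu mo \<in> R \<and> de mo \<in> R \<and> de mo \<noteq> 0 \<and> Poly_Mapping.lookup p mo = nu mo / de mo"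
    by metis
  then have nu: "\<And>mo. nu mo \<in> R" and de: "\<And>mo. de mo \<in> R" "\<And>mo. de mo \<noteq> 0"
    and p_eq: "\<And>mo. Poly_Mapping.lookup p mo = nu mo / de mo"
    by auto
  define S where "S = Poly_Mapping.keys p"
  define c where "c mo = nu mo * (\<Prod>mo'\<in>S - {mo}. de mo')" for mo
  have c_eq: "c mo = (\<Prod>mo\<in>S. de mo) * Poly_Mapping.lookup p mo" if "mo \<in> S" for mo
    using prod.remove[of S mo de] that de(2) by (simp add: S_def c_def p_eq)
  obtain M where "M \<in> S" using \<open>p \<noteq> 0\<close> by (metis S_def ex_in_conv keys_eq_empty)
  show ?thesis
  proof (rule alg_dependentI_relation)
    show "c mo \<in> R" for mo
      unfolding c_def using nu de by (intro subring_mult[OF R] subring_prod[OF R]) auto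
    show "c M \<noteq> 0"
      using c_eq[OF \<open>M \<in> S\<close>] \<open>M \<in> S\<close> de(2) by (simp add: S_def in_keys_iff)
    have "(\<Sum>mo\<in>S. c mo * monomial_eval x mo) = (\<Prod>mo\<in>S. de mo) * poly_eval p x"
      by (simp add: c_eq poly_eval_eq_poly_eval_map poly_eval_map_def S_def sum_distrib_left mult.assoc)
    then show "(\<Sum>mo\<in>S. c mo * monomial_eval x mo) = 0"
      using \<open>poly_eval p x = 0\<close> by simp
  qed (use \<open>M \<in> S\<close> p_vars subring_0[OF R] in \<open>auto simp: S_def\<close>)
qed

lemma derivation_add: "is_derivation D \<Longrightarrow> D (x + y) = D x + D y"
  and derivation_mult: "is_derivation D \<Longrightarrow> D (x * y) = x * D y + D x * y"
  unfolding is_derivation_def by auto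

lemma derivation_zero: "is_derivation D \<Longrightarrow> D 0 = 0"
  using derivation_add[of D 0 0] by (metis add_0 add_cancel_right_right)

lemma derivation_uminus: "is_derivation D \<Longrightarrow> D (- x) = - D x"
  using derivation_add[of D x "- x"] derivation_zero[of D] by (simp add: add.inverse_unique)

lemma derivation_divide:
  assumes "is_derivation D" "y \<noteq> 0"
  shows "D (x / y) = (D x * y - x * D y) / (y * y)"
proof -
  have "D x = x / y * D y + D (x / y) * y"
    using derivation_mult[OF assms(1), of "x / y" y] assms(2) by simp
  then show ?thesis
    using assms(2) by (simp add: field_simps)
qed

lemma diff_subfield_subring: "diff_subfield D G \<Longrightarrow> is_subring G"
  by (auto simp: diff_subfield_def is_subring_def)

lemma diff_subfield_funpow: "diff_subfield D G \<Longrightarrow> x \<in> G \<Longrightarrow> (D ^^ k) x \<in> G"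
  by (induction k) (auto simp: diff_subfield_def)

lemma diff_subfield_diff_field_gen: "diff_subfield D (diff_field_gen D K S)"
  unfolding diff_field_gen_def diff_subfield_def by blast

lemma subset_diff_field_gen: "K \<union> S \<subseteq> diff_field_gen D K S"
  unfolding diff_field_gen_def by blast

lemma diff_field_gen_least: "diff_subfield D L \<Longrightarrow> K \<union> S \<subseteq> L \<Longrightarrow> diff_field_gen D K S \<subseteq> L"
  unfolding diff_field_gen_def by blast

lemma diff_subfield_fractions:
  assumes D: "is_derivation D" and R: "is_subring R" and closed: "\<And>x. x \<in> R \<Longrightarrow> D x \<in> R"
  shows "diff_subfield D (fractions R)"
  unfolding diff_subfield_def
proof (intro conjI ballI)
  show "0 \<in> fractions R" "1 \<in> fractions R"
    using subset_fractions[OF R] subring_0[OF R] subring_1[OF R] by auto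
next
  fix s t assume "s \<in> fractions R" "t \<in> fractions R"
  then obtain a b c d where s: "s = a / b" "a \<in> R" "b \<in> R" "b \<noteq> 0"
    and t: "t = c / d" "c \<in> R" "d \<in> R" "d \<noteq> 0"
    unfolding fractions_def by blast
  have "s + t = (a * d + c * b) / (b * d)" "s * t = (a * c) / (b * d)"
    using s t by (simp_all add: field_simps)
  moreover have "a * d + c * b \<in> R" "a * c \<in> R" "b * d \<in> R" "b * d \<noteq> 0"
    using s t by (simp_all add: subring_add[OF R] subring_mult[OF R])
  ultimately show "s + t \<in> fractions R" "s * t \<in> fractions R"
    unfolding fractions_def by blast+
next
  fix s assume "s \<in> fractions R"
  then obtain a b where s: "s = a / b" "a \<in> R" "b \<in> R" "b \<noteq> 0"
    unfolding fractions_def by blast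
  show "- s \<in> fractions R"
    using s subring_uminus[OF R, of a] unfolding fractions_def by (intro CollectI exI[of _ "- a"] exI[of _ b]) auto
  show "inverse s \<in> fractions R"
  proof (cases "a = 0")
    case True
    then show ?thesis using s subset_fractions[OF R] subring_0[OF R] by auto
  next
    case False
    then show ?thesis using s unfolding fractions_def by (intro CollectI exI[of _ b] exI[of _ a]) simp
  qed
  have "D s = (D a * b - a * D b) / (b * b)"
    using s derivation_divide[OF D] by simp
  moreover have "D a * b - a * D b \<in> R" "b * b \<in> R" "b * b \<noteq> 0"
    using s by (auto intro!: subring_diff[OF R] subring_mult[OF R] closed)
  ultimately show "D s \<in> fractions R"
    unfolding fractions_def by blast
qed

inductive_set ring_adjoin :: "'a::comm_ring_1 set \<Rightarrow> 'a set \<Rightarrow> 'a set" for G X where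
  base: "c \<in> G \<Longrightarrow> c \<in> ring_adjoin G X"
| gen: "x \<in> X \<Longrightarrow> x \<in> ring_adjoin G X"
| add: "x \<in> ring_adjoin G X \<Longrightarrow> y \<in> ring_adjoin G X \<Longrightarrow> x + y \<in> ring_adjoin G X"
| mult: "x \<in> ring_adjoin G X \<Longrightarrow> y \<in> ring_adjoin G X \<Longrightarrow> x * y \<in> ring_adjoin G X"
| uminus: "x \<in> ring_adjoin G X \<Longrightarrow> - x \<in> ring_adjoin G X"

lemma is_subring_ring_adjoin: "is_subring G \<Longrightarrow> is_subring (ring_adjoin G X)"
  unfolding is_subring_def by (blast intro: ring_adjoin.intros)

lemma ring_adjoin_mono: "G \<subseteq> G' \<Longrightarrow> ring_adjoin G X \<subseteq> ring_adjoin G' X"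
proof
  fix x assume "G \<subseteq> G'" "x \<in> ring_adjoin G X"
  then show "x \<in> ring_adjoin G' X"
    by (induction rule: ring_adjoin.induct[OF \<open>x \<in> ring_adjoin G X\<close>])
       (auto intro: ring_adjoin.intros)
qed

lemma ring_adjoin_derivation_closed:
  assumes D: "is_derivation D" and "\<And>c. c \<in> G \<Longrightarrow> D c \<in> G" and "\<And>x. x \<in> X \<Longrightarrow> D x \<in> X"
    and "x \<in> ring_adjoin G X"
  shows "D x \<in> ring_adjoin G X"
  using assms(4)
  by induction
     (auto simp: derivation_add[OF D] derivation_mult[OF D] derivation_uminus[OF D] assms(2,3)
       intro: ring_adjoin.intros)

lemma poly_eval_in_ring_adjoin:
  assumes "is_subring G" "Q \<in> polys_over G V"
  shows "poly_eval Q x \<in> ring_adjoin G (x ` V)"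
  using assms polys_over_keys[OF assms(2)]
  by (intro poly_eval_in_subring is_subring_ring_adjoin)
     (auto intro: ring_adjoin.base ring_adjoin.gen polys_over_lookup)

lemma ring_adjoin_obtain_poly:
  assumes G: "is_subring G" and "y \<in> ring_adjoin G (x ` V)"
  obtains Q where "Q \<in> polys_over G V" "poly_eval Q x = y"
proof -
  from assms(2) have "\<exists>Q\<in>polys_over G V. poly_eval Q x = y"
  proof induction
    case (base c)
    then show ?case
      using G by (intro bexI[of _ "Poly_Mapping.single 0 c"]) (auto simp: poly_eval_single polys_over_single)
  next
    case (gen y)
    then obtain v where "v \<in> V" "y = x v" by blast
    then show ?case
      using G
      by (intro bexI[of _ "Poly_Mapping.single (Poly_Mapping.single v 1) 1"])
         (auto simp: poly_eval_single subring_1 intro!: polys_over_single)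
  next
    case (add y z)
    then obtain Q1 Q2 where "Q1 \<in> polys_over G V" "poly_eval Q1 x = y"
      and "Q2 \<in> polys_over G V" "poly_eval Q2 x = z" by blast
    then show ?case
      using G by (intro bexI[of _ "Q1 + Q2"]) (auto simp: poly_eval_add polys_over_add)
  next
    case (mult y z)
    then obtain Q1 Q2 where "Q1 \<in> polys_over G V" "poly_eval Q1 x = y"
      and "Q2 \<in> polys_over G V" "poly_eval Q2 x = z" by blast
    then show ?case
      using G by (intro bexI[of _ "Q1 * Q2"]) (auto simp: poly_eval_mult polys_over_mult)
  next
    case (uminus y)
    then obtain Q where "Q \<in> polys_over G V" "poly_eval Q x = y" by blast
    then show ?case
      using G by (intro bexI[of _ "- Q"]) (auto simp: poly_eval_uminus polys_over_uminus)
  qed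
  then show thesis using that by blast
qed

section \<open>Specializing algebraically independent elements\<close>

locale specialization =
  fixes F L :: "'a::field set" and V :: "'v set" and A B :: "'v \<Rightarrow> 'a"
  assumes subring_F: "is_subring F" and subring_L: "is_subring L" and F_subset_L: "F \<subseteq> L"
    and B_in_F: "\<And>v. v \<in> V \<Longrightarrow> B v \<in> F"
    and alg_indep: "\<not> alg_dependent L V A"
begin

abbreviation "RL \<equiv> ring_adjoin L (A ` V)"
abbreviation "RF \<equiv> ring_adjoin F (A ` V)"

lemma subring_RL: "is_subring RL" and subring_RF: "is_subring RF"
  by (simp_all add: is_subring_ring_adjoin subring_L subring_F)

lemma RF_subset_RL: "RF \<subseteq> RL"
  by (rule ring_adjoin_mono[OF F_subset_L])

lemma polys_over_L_eval_eq_0: "Q \<in> polys_over L V \<Longrightarrow> poly_eval Q A = 0 \<Longrightarrow> Q = 0"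
  using alg_indep unfolding alg_dependent_iff_polys_over by blast

definition rep :: "'a \<Rightarrow> ('v \<Rightarrow>\<^sub>0 nat) \<Rightarrow>\<^sub>0 'a" where
  "rep x = (SOME Q. Q \<in> polys_over L V \<and> poly_eval Q A = x)"

lemma rep_correct: "x \<in> RL \<Longrightarrow> rep x \<in> polys_over L V \<and> poly_eval (rep x) A = x"
  unfolding rep_def by (rule someI_ex) (meson ring_adjoin_obtain_poly[OF subring_L])

lemma rep_poly_eval:
  assumes "Q \<in> polys_over L V"
  shows "rep (poly_eval Q A) = Q"
proof -
  have x: "poly_eval Q A \<in> RL"
    by (rule poly_eval_in_ring_adjoin[OF subring_L assms])
  have "Q - rep (poly_eval Q A) \<in> polys_over L V"
    using rep_correct[OF x] assms by (intro polys_over_diff[OF subring_L]) auto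
  moreover have "poly_eval (Q - rep (poly_eval Q A)) A = 0"
    using rep_correct[OF x] by (simp add: poly_eval_diff)
  ultimately show ?thesis
    using polys_over_L_eval_eq_0 by fastforce
qed

lemma rep_add: "x \<in> RL \<Longrightarrow> y \<in> RL \<Longrightarrow> rep (x + y) = rep x + rep y"
  using rep_correct[of x] rep_correct[of y] rep_poly_eval[of "rep x + rep y"]
  by (simp add: polys_over_add[OF subring_L] poly_eval_add)

lemma rep_mult: "x \<in> RL \<Longrightarrow> y \<in> RL \<Longrightarrow> rep (x * y) = rep x * rep y"
  using rep_correct[of x] rep_correct[of y] rep_poly_eval[of "rep x * rep y"]
  by (simp add: polys_over_mult[OF subring_L] poly_eval_mult)

lemma rep_const: "c \<in> L \<Longrightarrow> rep c = Poly_Mapping.single 0 c"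
  using rep_poly_eval[of "Poly_Mapping.single 0 c"]
  by (simp add: polys_over_single[OF subring_L] poly_eval_single)

lemma rep_A: "v \<in> V \<Longrightarrow> rep (A v) = Poly_Mapping.single (Poly_Mapping.single v 1) 1"
  using rep_poly_eval[of "Poly_Mapping.single (Poly_Mapping.single v 1) 1"]
  by (simp add: polys_over_single[OF subring_L] subring_1[OF subring_L] poly_eval_single)

definition specialize :: "'a \<Rightarrow> 'a" where
  "specialize x = poly_eval (rep x) B"

text \<open>The value of \<open>deform x\<close> at \<open>t\<close> is \<open>x\<close> with every \<open>A v\<close> replaced by
  \<open>B v + t (A v - B v)\<close>; it joins \<open>specialize x\<close> at \<open>t = 0\<close> to \<open>x\<close> at \<open>t = 1\<close>.\<close>

definition deform :: "'a \<Rightarrow> 'a poly" where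
  "deform x = poly_eval_map (\<lambda>c. [:c:]) (\<lambda>v. [:B v, A v - B v:]) (rep x)"

lemma ring_hom_on_specialize: "ring_hom_on RL specialize"
  using rep_const[OF subring_0[OF subring_L]] rep_const[OF subring_1[OF subring_L]]
  by (simp add: ring_hom_on_def specialize_def rep_add rep_mult poly_eval_add poly_eval_mult
      poly_eval_single)

lemma ring_hom_on_deform: "ring_hom_on RL deform"
  using rep_const[OF subring_0[OF subring_L]] rep_const[OF subring_1[OF subring_L]]
  by (simp add: ring_hom_on_def deform_def rep_add rep_mult poly_eval_map_one[OF is_ring_hom_const_poly]
      poly_eval_map_add[OF is_ring_hom_const_poly] poly_eval_map_mult[OF is_ring_hom_const_poly])

lemma poly_deform: "poly (deform x) t = poly_eval (rep x) (\<lambda>v. B v + t * (A v - B v))"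
  by (simp add: deform_def poly_poly_eval_map_const)

lemma poly_deform_1: "x \<in> RL \<Longrightarrow> poly (deform x) 1 = x"
  using rep_correct[of x] by (simp add: poly_deform)

lemma poly_deform_0: "poly (deform x) 0 = specialize x"
  by (simp add: poly_deform specialize_def)

lemma specialize_const: "c \<in> L \<Longrightarrow> specialize c = c"
  by (simp add: specialize_def rep_const poly_eval_single)

lemma specialize_A: "v \<in> V \<Longrightarrow> specialize (A v) = B v"
  by (simp add: specialize_def rep_A poly_eval_single)

lemma specialize_in_L:
  assumes "x \<in> RL" shows "specialize x \<in> L"
  unfolding specialize_def using rep_correct[OF assms] F_subset_L B_in_F
  by (intro poly_eval_in_subring[OF subring_L]) (auto dest: polys_over_keys intro: polys_over_lookup)

lemma specialize_poly_eval:
  assumes "\<And>mo. Poly_Mapping.lookup Q mo \<in> L"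
    and "\<And>mo v. mo \<in> Poly_Mapping.keys Q \<Longrightarrow> v \<in> Poly_Mapping.keys mo \<Longrightarrow> X v \<in> RL"
  shows "specialize (poly_eval Q X) = poly_eval Q (specialize \<circ> X)"
proof -
  have "specialize (poly_eval Q X) = poly_eval_map specialize (specialize \<circ> X) Q"
    using assms by (intro ring_hom_on_poly_eval[OF ring_hom_on_specialize subring_RL])
      (auto intro: ring_adjoin.base)
  also have "\<dots> = poly_eval Q (specialize \<circ> X)"
    unfolding poly_eval_eq_poly_eval_map using assms(1)
    by (intro poly_eval_map_cong) (simp add: specialize_const)
  finally show ?thesis .
qed

lemma coeff_deform_in_RF:
  assumes "c \<in> RF" shows "coeff (deform c) i \<in> RF"
proof -
  obtain Q where Q: "Q \<in> polys_over F V" "poly_eval Q A = c"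
    using ring_adjoin_obtain_poly[OF subring_F assms] by blast
  have "rep c = Q"
    using Q rep_poly_eval polys_over_mono[OF F_subset_L] by blast
  moreover have "poly_eval_map (\<lambda>c. [:c:]) (\<lambda>v. [:B v, A v - B v:]) Q \<in> {p. \<forall>i. coeff p i \<in> RF}"
  proof (rule poly_eval_map_in_subring[OF is_subring_coeffs_in[OF subring_RF]])
    fix mo
    have "Poly_Mapping.lookup Q mo \<in> RF"
      using polys_over_lookup[OF Q(1)] by (rule ring_adjoin.base)
    then show "[:Poly_Mapping.lookup Q mo:] \<in> {p. \<forall>i. coeff p i \<in> RF}"
      using subring_0[OF subring_RF] by (auto simp: coeff_pCons split: nat.splits)
  next
    fix mo v assume "mo \<in> Poly_Mapping.keys Q" "v \<in> Poly_Mapping.keys mo"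
    then have "v \<in> V" using polys_over_keys[OF Q(1)] by blast
    then have "B v \<in> RF" "A v \<in> RF"
      using B_in_F by (auto intro: ring_adjoin.base ring_adjoin.gen)
    then have "B v \<in> RF" "A v - B v \<in> RF"
      by (auto intro: subring_diff[OF subring_RF])
    then show "[:B v, A v - B v:] \<in> {p. \<forall>i. coeff p i \<in> RF}"
      using subring_0[OF subring_RF] by (auto simp: coeff_pCons split: nat.splits)
  qed
  ultimately show ?thesis by (simp add: deform_def)
qed

lemma alg_dependent_specialize_RF:
  assumes dep: "alg_dependent RF I z" and z: "\<And>v. v \<in> I \<Longrightarrow> z v \<in> RL"
  shows "alg_dependent RF I (specialize \<circ> z)"
proof -
  obtain q where "q \<noteq> 0" and q_RF: "\<And>mo. Poly_Mapping.lookup q mo \<in> RF"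
    and q_vars: "\<And>mo. mo \<in> Poly_Mapping.keys q \<Longrightarrow> Poly_Mapping.keys mo \<subseteq> I"
    and "poly_eval q z = 0"
    using dep unfolding alg_dependent_def by blast
  define S where "S = Poly_Mapping.keys q"
  let ?a = "\<lambda>mo. deform (Poly_Mapping.lookup q mo)"
  have z_RL: "z v \<in> RL" if "mo \<in> Poly_Mapping.keys q" "v \<in> Poly_Mapping.keys mo" for mo v
    using that q_vars z by blast
  have "deform (poly_eval q z) = poly_eval_map deform (deform \<circ> z) q"
    using q_RF RF_subset_RL z_RL
    by (intro ring_hom_on_poly_eval[OF ring_hom_on_deform subring_RL]) auto
  then have rel: "(\<Sum>mo\<in>S. ?a mo * monomial_eval (deform \<circ> z) mo) = 0"
    using \<open>poly_eval q z = 0\<close> ring_hom_on_deform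
    by (simp add: poly_eval_map_def S_def ring_hom_on_def)
  have a_nonzero: "?a mo \<noteq> 0" if "mo \<in> S" for mo
  proof -
    have "Poly_Mapping.lookup q mo \<in> RL" using q_RF RF_subset_RL by blast
    then show ?thesis
      using poly_deform_1[of "Poly_Mapping.lookup q mo"] that by (auto simp: S_def in_keys_iff)
  qed
  have "finite S" "S \<noteq> {}"
    using \<open>q \<noteq> 0\<close> by (simp_all add: S_def)
  then obtain k M where "M \<in> S" "coeff (?a M) k \<noteq> 0"
    and rel0: "(\<Sum>mo\<in>S. coeff (?a mo) k * monomial_eval (\<lambda>v. poly ((deform \<circ> z) v) 0) mo) = 0"
    using lowest_coeff_relation[OF _ _ a_nonzero rel] by blast
  show ?thesis
  proof (rule alg_dependentI_relation)
    show "(\<Sum>mo\<in>S. coeff (?a mo) k * monomial_eval (specialize \<circ> z) mo) = 0"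
      using rel0 by (simp add: poly_deform_0 comp_def)
  qed (use \<open>M \<in> S\<close> \<open>coeff (?a M) k \<noteq> 0\<close> q_vars q_RF coeff_deform_in_RF subring_0[OF subring_RF]
      in \<open>auto simp: S_def\<close>)
qed

lemma alg_dependent_RF_imp_F:
  assumes dep: "alg_dependent RF I y" and y: "\<And>v. v \<in> I \<Longrightarrow> y v \<in> L"
  shows "alg_dependent F I y"
proof -
  obtain p where "p \<noteq> 0" and p_RF: "\<And>mo. Poly_Mapping.lookup p mo \<in> RF"
    and p_vars: "\<And>mo. mo \<in> Poly_Mapping.keys p \<Longrightarrow> Poly_Mapping.keys mo \<subseteq> I"
    and "poly_eval p y = 0"
    using dep unfolding alg_dependent_def by blast
  define S where "S = Poly_Mapping.keys p"
  obtain M where "M \<in> S" using \<open>p \<noteq> 0\<close> by (metis S_def ex_in_conv keys_eq_empty)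
  have "\<forall>mo. \<exists>Q. Q \<in> polys_over F V \<and> poly_eval Q A = Poly_Mapping.lookup p mo"
    using ring_adjoin_obtain_poly[OF subring_F p_RF] by metis
  then obtain Q where Q_F: "\<And>mo. Q mo \<in> polys_over F V"
    and Q_eval: "\<And>mo. poly_eval (Q mo) A = Poly_Mapping.lookup p mo"
    by metis
  have mon_L: "monomial_eval y mo \<in> L" if "mo \<in> S" for mo
    using that p_vars y by (intro monomial_eval_in_subring[OF subring_L]) (auto simp: S_def)
  define H where "H = (\<Sum>mo\<in>S. Poly_Mapping.single 0 (monomial_eval y mo) * Q mo)"
  have "H \<in> polys_over L V"
    unfolding H_def using mon_L Q_F polys_over_mono[OF F_subset_L]
    by (intro polys_over_sum[OF subring_L] polys_over_mult[OF subring_L] polys_over_single[OF subring_L])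
       auto
  moreover have "poly_eval H A = (\<Sum>mo\<in>S. monomial_eval y mo * Poly_Mapping.lookup p mo)"
    by (simp add: H_def poly_eval_sum poly_eval_mult poly_eval_single Q_eval)
  then have "poly_eval H A = poly_eval p y"
    by (simp add: poly_eval_eq_poly_eval_map poly_eval_map_def S_def mult.commute)
  ultimately have "H = 0"
    using \<open>poly_eval p y = 0\<close> polys_over_L_eval_eq_0 by simp
  have "Q M \<noteq> 0"
    using Q_eval[of M] \<open>M \<in> S\<close> by (auto simp: S_def in_keys_iff)
  then obtain N where N: "N \<in> Poly_Mapping.keys (Q M)"
    by (metis ex_in_conv keys_eq_empty)
  show ?thesis
  proof (rule alg_dependentI_relation)
    have "Poly_Mapping.lookup H N = (\<Sum>mo\<in>S. Poly_Mapping.lookup (Q mo) N * monomial_eval y mo)"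
      unfolding H_def lookup_sum lookup_single_zero_mult by (rule sum.cong[OF refl]) (rule mult.commute)
    then show "(\<Sum>mo\<in>S. Poly_Mapping.lookup (Q mo) N * monomial_eval y mo) = 0"
      using \<open>H = 0\<close> by simp
  qed (use \<open>M \<in> S\<close> N p_vars Q_F subring_0[OF subring_F] in
      \<open>auto simp: S_def in_keys_iff intro: polys_over_lookup\<close>)
qed

theorem alg_dependent_specialize:
  assumes "alg_dependent (fractions RF) I z" and "\<And>v. v \<in> I \<Longrightarrow> z v \<in> RL"
  shows "alg_dependent F I (specialize \<circ> z)"
  using alg_dependent_fractions[OF subring_RF assms(1)] assms(2)
  by (auto intro!: alg_dependent_RF_imp_F alg_dependent_specialize_RF specialize_in_L)

end

section \<open>Specializing differential indeterminates\<close>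

definition derivs :: "('a \<Rightarrow> 'a) \<Rightarrow> ('i \<Rightarrow> 'a) \<Rightarrow> 'i \<times> nat \<Rightarrow> 'a" where
  "derivs D u = (\<lambda>(j, k). (D ^^ k) (u j))"

lemma diff_dependent_iff_derivs:
  "diff_dependent D G I u \<longleftrightarrow> alg_dependent G (I \<times> UNIV) (derivs D u)"
  by (simp add: diff_dependent_def derivs_def)

lemma is_diff_poly_var:
  "is_diff_poly F r n Q \<Longrightarrow> mo \<in> Poly_Mapping.keys Q \<Longrightarrow> (v, k) \<in> Poly_Mapping.keys mo \<Longrightarrow>
     (case v of Inl j \<Rightarrow> j < r | Inr i \<Rightarrow> i < n)"
  unfolding is_diff_poly_def by fastforce

locale diff_specialization =
  fixes D :: "'a::field \<Rightarrow> 'a" and F L :: "'a set" and r :: nat and u ubar :: "nat \<Rightarrow> 'a"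
  assumes derivation: "is_derivation D"
    and diff_subfield_F: "diff_subfield D F" and diff_subfield_L: "diff_subfield D L"
    and subset_L: "F \<subseteq> L"
    and ubar_in_F: "\<And>j. j < r \<Longrightarrow> ubar j \<in> F"
    and diff_indep: "\<not> diff_dependent D L {..<r} u"

sublocale diff_specialization \<subseteq> specialization F L "{..<r} \<times> UNIV" "derivs D u" "derivs D ubar"
  using diff_subfield_subring[OF diff_subfield_F] diff_subfield_subring[OF diff_subfield_L]
    subset_L diff_subfield_funpow[OF diff_subfield_F] ubar_in_F diff_indep
  by unfold_locales (auto simp: derivs_def diff_dependent_iff_derivs)

context diff_specialization
begin

lemma D_derivs: "D (derivs D u (j, k)) = derivs D u (j, Suc k)"
  and D_derivs_bar: "D (derivs D ubar (j, k)) = derivs D ubar (j, Suc k)"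
  by (simp_all add: derivs_def)

lemma derivs_in_RL: "j < r \<Longrightarrow> (D ^^ k) (u j) \<in> RL"
  and derivs_in_RF: "j < r \<Longrightarrow> (D ^^ k) (u j) \<in> RF"
proof -
  assume "j < r"
  then have "derivs D u (j, k) \<in> derivs D u ` ({..<r} \<times> UNIV)"
    by (intro imageI) simp
  from ring_adjoin.gen[OF this] show "(D ^^ k) (u j) \<in> RL" "(D ^^ k) (u j) \<in> RF"
    by (simp_all add: derivs_def)
qed

lemma derivation_closed_RL: "x \<in> RL \<Longrightarrow> D x \<in> RL"
  and derivation_closed_RF: "y \<in> RF \<Longrightarrow> D y \<in> RF"
  by (auto intro!: ring_adjoin_derivation_closed[OF derivation] simp: D_derivs
      diff_subfield_L[unfolded diff_subfield_def] diff_subfield_F[unfolded diff_subfield_def])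

lemma diff_field_gen_subset_fractions: "diff_field_gen D F (u ` {..<r}) \<subseteq> fractions RF"
proof (rule diff_field_gen_least)
  show "diff_subfield D (fractions RF)"
    using derivation subring_RF derivation_closed_RF by (rule diff_subfield_fractions)
  have "u j \<in> RF" if "j < r" for j
    using derivs_in_RF[OF that, of 0] by simp
  then show "F \<union> u ` {..<r} \<subseteq> fractions RF"
    using subset_fractions[OF subring_RF] by (auto intro: ring_adjoin.base)
qed

lemma specialize_derivation:
  assumes "x \<in> RL" shows "specialize (D x) = D (specialize x)"
  using assms
proof induction
  case (base c)
  then show ?case
    using diff_subfield_L by (simp add: specialize_const diff_subfield_def)
next
  case (gen y)
  then obtain j k where "j < r" "y = derivs D u (j, k)" by auto
  then show ?case by (simp add: D_derivs D_derivs_bar specialize_A)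
next
  case (add x y)
  then show ?case
    using ring_hom_on_specialize derivation_closed_RL
    by (simp add: derivation_add[OF derivation] ring_hom_on_def)
next
  case (mult x y)
  then show ?case
    using ring_hom_on_specialize derivation_closed_RL
    by (simp add: derivation_mult[OF derivation] derivation_add[OF derivation] ring_hom_on_def
        subring_mult[OF subring_RL])
next
  case (uminus x)
  then show ?case
    using derivation_closed_RL
    by (simp add: derivation_uminus[OF derivation] ring_hom_on_uminus[OF ring_hom_on_specialize subring_RL])
qed

lemma funpow_derivation_in_RL: "x \<in> RL \<Longrightarrow> (D ^^ k) x \<in> RL"
  by (induction k) (auto intro: derivation_closed_RL)

lemma specialize_funpow_derivation: "x \<in> RL \<Longrightarrow> specialize ((D ^^ k) x) = (D ^^ k) (specialize x)"
proof (induction k)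
  case (Suc k)
  then show ?case
    using funpow_derivation_in_RL[OF Suc.prems] by (simp add: specialize_derivation)
qed simp

lemma dpoly_eval_in_RL_and_specialize:
  assumes Q: "is_diff_poly F r n Q" and ybar: "\<And>i k. i < n \<Longrightarrow> (D ^^ k) (ybar i) \<in> L"
  shows "dpoly_eval D Q u ybar \<in> RL"
    and "specialize (dpoly_eval D Q u ybar) = dpoly_eval D Q ubar ybar"
proof -
  define X where "X = (\<lambda>(v, k). (D ^^ k) (case v of Inl j \<Rightarrow> u j | Inr i \<Rightarrow> ybar i))"
  have coeffs: "Poly_Mapping.lookup Q mo \<in> L" for mo
    using Q F_subset_L by (auto simp: is_diff_poly_def)
  have X: "X w \<in> RL \<and> specialize (X w) =
      (\<lambda>(v, k). (D ^^ k) (case v of Inl j \<Rightarrow> ubar j | Inr i \<Rightarrow> ybar i)) w"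
    if "mo \<in> Poly_Mapping.keys Q" "w \<in> Poly_Mapping.keys mo" for mo w
  proof -
    obtain v k where w: "w = (v, k)" by fastforce
    show ?thesis
    proof (cases v)
      case (Inl j)
      then have "j < r" using is_diff_poly_var[OF Q] that w by fastforce
      then show ?thesis
        using Inl w derivs_in_RL specialize_A[of "(j, k)"] by (auto simp: X_def derivs_def)
    next
      case (Inr i)
      then have "(D ^^ k) (ybar i) \<in> L" using is_diff_poly_var[OF Q] that w ybar by fastforce
      then show ?thesis
        using Inr w by (auto simp: X_def specialize_const intro: ring_adjoin.base)
    qed
  qed
  show "dpoly_eval D Q u ybar \<in> RL"
    unfolding dpoly_eval_def X_def[symmetric] using coeffs X
    by (intro poly_eval_in_subring[OF subring_RL]) (auto intro: ring_adjoin.base)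
  have "specialize (poly_eval Q X) = poly_eval Q (specialize \<circ> X)"
    using coeffs X by (intro specialize_poly_eval) auto
  also have "\<dots> = dpoly_eval D Q ubar ybar"
    unfolding dpoly_eval_def using X by (intro poly_eval_cong) auto
  finally show "specialize (dpoly_eval D Q u ybar) = dpoly_eval D Q ubar ybar"
    by (simp add: dpoly_eval_def X_def)
qed

theorem diff_dependent_specialize:
  assumes P: "\<And>i. i < m \<Longrightarrow> is_diff_poly F r n (P i)"
    and ybar: "\<And>i k. i < n \<Longrightarrow> (D ^^ k) (ybar i) \<in> L"
    and dep: "diff_dependent D (diff_field_gen D F (u ` {..<r})) {..<m}
      (\<lambda>i. dpoly_eval D (P i) u ybar)"
  shows "diff_dependent D F {..<m} (\<lambda>i. dpoly_eval D (P i) ubar ybar)"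
proof -
  let ?z = "derivs D (\<lambda>i. dpoly_eval D (P i) u ybar)"
  have z: "?z v \<in> RL \<and> specialize (?z v) = derivs D (\<lambda>i. dpoly_eval D (P i) ubar ybar) v"
    if v_in: "v \<in> {..<m} \<times> UNIV" for v
  proof -
    obtain i k where v: "v = (i, k)" and "i < m" using v_in by blast
    note Pi = dpoly_eval_in_RL_and_specialize[OF P[OF \<open>i < m\<close>] ybar]
    show ?thesis
      using funpow_derivation_in_RL[OF Pi(1)] specialize_funpow_derivation[OF Pi(1)] Pi(2)
      by (simp add: v derivs_def)
  qed
  have "alg_dependent F ({..<m} \<times> UNIV) (specialize \<circ> ?z)"
    using dep diff_field_gen_subset_fractions z
    by (intro alg_dependent_specialize) (auto simp: diff_dependent_iff_derivs intro: alg_dependent_mono)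
  then show ?thesis
    unfolding diff_dependent_iff_derivs
    by (rule alg_dependent_cong[rotated]) (simp add: z)
qed

end

theorem theorem2p16:
  fixes D :: "'a::field_char_0 \<Rightarrow> 'a" and F :: "'a set"
    and r n m :: nat and u ybar ubar :: "nat \<Rightarrow> 'a"
    and P :: "nat \<Rightarrow> 'a dpoly"
  assumes "is_derivation D"
    and "diff_subfield D F"
    and "\<not> diff_dependent D F {..<r} u"
    and "\<forall>i<m. is_diff_poly F r n (P i)"
    and "\<not> diff_dependent D (diff_field_gen D F (ybar ` {..<n})) {..<r} u"
    and "diff_dependent D (diff_field_gen D F (u ` {..<r})) {..<m}
           (\<lambda>i. dpoly_eval D (P i) u ybar)"
    and "\<forall>j<r. ubar j \<in> F"
  shows "diff_dependent D F {..<m} (\<lambda>i. dpoly_eval D (P i) ubar ybar)"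
proof -
  let ?L = "diff_field_gen D F (ybar ` {..<n})"
  interpret diff_specialization D F ?L r u ubar
    using assms(1,2,5,7) subset_diff_field_gen[of F "ybar ` {..<n}" D]
    by unfold_locales (auto simp: diff_subfield_diff_field_gen)
  have "(D ^^ k) (ybar i) \<in> ?L" if "i < n" for i k
    using that subset_diff_field_gen[of F "ybar ` {..<n}" D]
    by (intro diff_subfield_funpow[OF diff_subfield_diff_field_gen]) auto
  then show ?thesis
    using assms(4,6) by (intro diff_dependent_specialize) auto
qed

end
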